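(* Let $k\ge2$, $0<a<1$, $d\ge2$, and let $\{\eta_n\}_{n\ge0}\subset\mathbb{C}\setminus\{0\}$ satisfy $|\eta_n|\le a^{d^n}$ for all $n\ge0$. Let \[ F_n(z_1,\dots,z_k)=(\eta_n z_k,\ z_2^d+\eta_n z_1,\ z_3^d+\eta_n z_2,\ \dots,\ z_k^d+\eta_n z_{k-1}), \] $F(n)=F_n\circ\cdots\circ F_0$, and $\Omega_{\{F_n\}}=\{z\in\mathbb{C}^k: F(n)(z)\to0 \text{ as } n\to\infty\}$. Then: (i) $\Omega_{\{F_n\}}$ is a non-empty open connected set; (ii) $\Omega_{\{F_n\}}=\bigcup_{j\ge1}\Omega_j$ with $\Omega_j\subset\Omega_{j+1}$ and each $\Omega_j$ biholomorphic to the unit ball $B^k(0;1)$; (iii) the infinitesimal Kobayashi metric on $\Omega_{\{F_n\}}$ vanishes identically; (iv) there exists a plurisubharmonic function $\phi:\mathbb{C}^k\to[\log a,\infty)$ such that $\Omega_{\{F_n\}}=\{z\in\mathbb{C}^k:\phi(z)<0\}$. *)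

theory Defs
  imports "HOL-Analysis.Analysis"
begin

text \<open>Points of C^k are vectors of type complex^('k::{finite,linorder}), where the index type 'k is a finite
linear order with CARD('k) = k; its elements in increasing order play the role of the
coordinate indices 1, ..., k.\<close>

definition first_idx :: "'k::{finite,linorder}" where
  "first_idx = Min UNIV"

definition last_idx :: "'k::{finite,linorder}" where
  "last_idx = Max UNIV"

definition pred_idx :: "'k::{finite,linorder} \<Rightarrow> 'k" where
  "pred_idx i = Max {j. j < i}"

definition Fmap :: "complex \<Rightarrow> nat \<Rightarrow> complex^('k::{finite,linorder}) \<Rightarrow> complex^('k::{finite,linorder})" where
  "Fmap eta d z = (\<chi> i. if i = first_idx then eta * z $ last_idx
                        else (z $ i) ^ d + eta * z $ (pred_idx i))"

fun Fiter :: "(nat \<Rightarrow> complex) \<Rightarrow> nat \<Rightarrow> nat \<Rightarrow> complex^('k::{finite,linorder}) \<Rightarrow> complex^('k::{finite,linorder})" where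
  "Fiter eta d 0 = Fmap (eta 0) d"
| "Fiter eta d (Suc n) = Fmap (eta (Suc n)) d \<circ> Fiter eta d n"

definition basin :: "(nat \<Rightarrow> complex) \<Rightarrow> nat \<Rightarrow> (complex^('k::{finite,linorder})) set" where
  "basin eta d = {z. (\<lambda>n. Fiter eta d n z) \<longlonglongrightarrow> 0}"

definition cholo_on :: "(complex^'n) set \<Rightarrow> (complex^'n \<Rightarrow> complex^'m) \<Rightarrow> bool" where
  "cholo_on S f \<longleftrightarrow> (\<forall>z\<in>S. \<exists>f'. (f has_derivative f') (at z) \<and>
                         (\<forall>c v. f' (c *s v) = c *s f' v))"

definition biholomorphic :: "(complex^'n) set \<Rightarrow> (complex^'m) set \<Rightarrow> bool" where
  "biholomorphic U V \<longleftrightarrow> open U \<and> open V \<and>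
     (\<exists>f g. cholo_on U f \<and> cholo_on V g \<and> f ` U = V \<and> g ` V = U \<and>
            (\<forall>z\<in>U. g (f z) = z) \<and> (\<forall>w\<in>V. f (g w) = w))"

definition disc_holo_on :: "complex set \<Rightarrow> (complex \<Rightarrow> complex^'n) \<Rightarrow> bool" where
  "disc_holo_on D f \<longleftrightarrow> (\<forall>w\<in>D. \<exists>v. (f has_derivative (\<lambda>h. h *s v)) (at w))"

definition kobayashi :: "(complex^'n) set \<Rightarrow> complex^'n \<Rightarrow> complex^'n \<Rightarrow> real" where
  "kobayashi \<Omega> z v = Inf {\<alpha>::real. \<alpha> > 0 \<and>
     (\<exists>f. disc_holo_on (ball 0 1) f \<and> f ` ball 0 1 \<subseteq> \<Omega> \<and> f 0 = z \<and>
          (f has_derivative (\<lambda>h. h *s ((1 / \<alpha>) *\<^sub>R v))) (at 0)) }"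

definition usc :: "('a::topological_space \<Rightarrow> real) \<Rightarrow> bool" where
  "usc f \<longleftrightarrow> (\<forall>x t. f x < t \<longrightarrow> eventually (\<lambda>y. f y < t) (at x))"

definition psh :: "(complex^'n \<Rightarrow> real) \<Rightarrow> bool" where
  "psh \<phi> \<longleftrightarrow> usc \<phi> \<and>
     (\<forall>z w. (\<lambda>t. \<phi> (z + exp (\<i> * of_real t) *s w)) integrable_on {0..2*pi} \<and>
            \<phi> z \<le> (1 / (2*pi)) * integral {0..2*pi} (\<lambda>t. \<phi> (z + exp (\<i> * of_real t) *s w)))"

end

theory Submission
  imports Defs "HOL-Complex_Analysis.Cauchy_Integral_Formula"
    "HOL-Computational_Algebra.Fundamental_Theorem_Algebra"
begin

text \<open>Since eta_n tends to 0, from some index N on every F_n halves the Euclidean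
  norm on the ball of radius r = 1/(4k). Hence the basin is the increasing union of the sets
  Omega_j = F(N+j)^-1(ball 0 r), and the invertible polynomial map F(N+j) identifies Omega_j with a
  ball; openness and connectedness follow since all Omega_j contain 0. On the basin the derivatives
  DF(n)(z) tend to 0, so pulling back complex lines through F(n)(z) yields holomorphic discs
  through z with arbitrarily large derivative, and the Kobayashi metric vanishes. Finally phi is the
  decreasing limit of phi_n = ln max(a^(d^n), |F(n)|_max) / d^n + ln 2 / ((d-1) d^n): each
  coordinate of F(n) is a polynomial along every complex line, so Jensen's inequality gives phi_n
  the sub-mean value property, and phi < 0 exactly where F(n)(z) tends to 0.\<close>

section \<open>Coordinates and the inverse of F_n\<close>

lemma first_idx_le [simp]: "first_idx \<le> (i::'k::{finite,linorder})"
  unfolding first_idx_def by simp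

lemma le_last_idx [simp]: "(i::'k::{finite,linorder}) \<le> last_idx"
  unfolding last_idx_def by simp

lemma pred_idx_less: "(i::'k::{finite,linorder}) \<noteq> first_idx \<Longrightarrow> pred_idx i < i"
proof -
  assume "i \<noteq> first_idx"
  then have "{j. j < i} \<noteq> {}"
    using first_idx_le[of i] by (metis empty_Collect_eq order.not_eq_order_implies_strict)
  then show ?thesis unfolding pred_idx_def using Max_in[of "{j. j < i}"] by auto
qed

lemma le_pred_idx: "(j::'k::{finite,linorder}) < i \<Longrightarrow> j \<le> pred_idx i"
  unfolding pred_idx_def by (rule Max_ge) auto

lemma greater_pred_idx:
  assumes "(i::'k::{finite,linorder}) \<noteq> first_idx"
  shows "{j. pred_idx i < j} = insert i {j. i < j}"
proof -
  have "pred_idx i < j \<longleftrightarrow> i \<le> j" for j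
  proof
    assume "pred_idx i < j"
    then show "i \<le> j" using le_pred_idx[of j i] by (meson leD leI)
  qed (use pred_idx_less[OF assms] in simp)
  then show ?thesis by (auto simp: order.order_iff_strict)
qed

definition idx_rank :: "'k::{finite,linorder} \<Rightarrow> nat" where
  "idx_rank i = card {j. i < j}"

definition idx_of_rank :: "nat \<Rightarrow> 'k::{finite,linorder}" where
  "idx_of_rank n = (pred_idx ^^ n) last_idx"

lemma idx_of_rank_0 [simp]: "idx_of_rank 0 = last_idx"
  unfolding idx_of_rank_def by simp

lemma idx_of_rank_Suc [simp]: "idx_of_rank (Suc n) = pred_idx (idx_of_rank n)"
  unfolding idx_of_rank_def by simp

lemma idx_rank_last [simp]: "idx_rank (last_idx::'k::{finite,linorder}) = 0"
  unfolding idx_rank_def by (simp add: not_less)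

lemma idx_rank_pred:
  "(i::'k::{finite,linorder}) \<noteq> first_idx \<Longrightarrow> idx_rank (pred_idx i) = Suc (idx_rank i)"
  unfolding idx_rank_def by (simp add: greater_pred_idx)

lemma idx_rank_less_card: "idx_rank (i::'k::{finite,linorder}) < CARD('k)"
  unfolding idx_rank_def by (rule psubset_card_mono) auto

lemma idx_rank_first: "idx_rank (first_idx::'k::{finite,linorder}) = CARD('k) - 1"
proof -
  have "{j. (first_idx::'k) < j} = UNIV - {first_idx}"
    by (auto simp: order.strict_iff_order)
  then show ?thesis unfolding idx_rank_def by (simp add: card_Diff_subset)
qed

lemma idx_rank_inj: "idx_rank (i::'k::{finite,linorder}) = idx_rank j \<Longrightarrow> i = j"
proof (rule ccontr)
  have "i < j \<Longrightarrow> idx_rank j < idx_rank i" for i j :: 'k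
    unfolding idx_rank_def by (rule psubset_card_mono) auto
  then show "idx_rank i = idx_rank j \<Longrightarrow> i \<noteq> j \<Longrightarrow> False"
    by (metis less_irrefl linorder_neqE)
qed

lemma idx_rank_of_rank:
  "n < CARD('k::{finite,linorder}) \<Longrightarrow> idx_rank (idx_of_rank n :: 'k) = n"
proof (induction n)
  case 0
  then show ?case by simp
next
  case (Suc n)
  then have "idx_of_rank n \<noteq> (first_idx::'k)"
    using idx_rank_first[where 'k='k] by auto
  with Suc show ?case by (simp add: idx_rank_pred)
qed

lemma idx_of_rank_rank [simp]: "idx_of_rank (idx_rank i) = (i::'k::{finite,linorder})"
  by (rule idx_rank_inj) (simp add: idx_rank_of_rank idx_rank_less_card)

lemma idx_of_rank_ne_first:
  "Suc n < CARD('k::{finite,linorder}) \<Longrightarrow> idx_of_rank n \<noteq> (first_idx::'k)"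
  using idx_rank_of_rank[of n, where 'k='k] idx_rank_first[where 'k='k] by auto

lemma Fmap_first_idx: "Fmap e d z $ first_idx = e * z $ last_idx"
  unfolding Fmap_def by simp

lemma Fmap_nth: "i \<noteq> first_idx \<Longrightarrow> Fmap e d z $ i = (z $ i) ^ d + e * z $ pred_idx i"
  unfolding Fmap_def by simp

lemma Fmap_zero: "d \<ge> 1 \<Longrightarrow> Fmap e d 0 = (0::complex^('k::{finite,linorder}))"
  by (simp add: vec_eq_iff Fmap_def)

lemma Fiter_zero: "d \<ge> 1 \<Longrightarrow> Fiter eta d n 0 = (0::complex^('k::{finite,linorder}))"
  by (induction n) (simp_all add: Fmap_zero)

text \<open>Solving Fmap e d z = w for z: the last coordinate is w_1 / e, and z_(i-1) = (w_i - z_i^d) / e.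
  The rank of an index counts the indices above it, so coordinates are recovered in order of rank.\<close>

fun Fmap_inv_rank :: "complex \<Rightarrow> nat \<Rightarrow> complex^('k::{finite,linorder}) \<Rightarrow> nat \<Rightarrow> complex" where
  "Fmap_inv_rank e d w 0 = w $ first_idx / e"
| "Fmap_inv_rank e d w (Suc n) = (w $ idx_of_rank n - Fmap_inv_rank e d w n ^ d) / e"

definition Fmap_inv :: "complex \<Rightarrow> nat \<Rightarrow> complex^('k::{finite,linorder}) \<Rightarrow> complex^('k::{finite,linorder})" where
  "Fmap_inv e d w = (\<chi> i. Fmap_inv_rank e d w (idx_rank i))"

lemma Fmap_Fmap_inv:
  assumes "e \<noteq> 0"
  shows "Fmap e d (Fmap_inv e d w) = w"
proof -
  have "Fmap e d (Fmap_inv e d w) $ i = w $ i" for i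
    using assms by (cases "i = first_idx") (simp_all add: Fmap_first_idx Fmap_nth Fmap_inv_def idx_rank_pred)
  then show ?thesis by (simp add: vec_eq_iff)
qed

lemma Fmap_inv_rank_Fmap:
  assumes "e \<noteq> 0"
  shows "n < CARD('k) \<Longrightarrow> Fmap_inv_rank e d (Fmap e d z) n = z $ (idx_of_rank n :: 'k::{finite,linorder})"
proof (induction n)
  case 0
  then show ?case using assms by (simp add: Fmap_first_idx)
next
  case (Suc n)
  then show ?case
    using assms by (simp add: Fmap_nth[OF idx_of_rank_ne_first])
qed

lemma Fmap_inv_Fmap: "e \<noteq> 0 \<Longrightarrow> Fmap_inv e d (Fmap e d z) = z"
  by (simp add: vec_eq_iff Fmap_inv_def Fmap_inv_rank_Fmap idx_rank_less_card)

section \<open>Holomorphic maps\<close>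

lemma has_derivative_vec_nthI:
  fixes f :: "'a::real_normed_vector \<Rightarrow> complex^'n"
  assumes "\<And>i. ((\<lambda>x. f x $ i) has_derivative (\<lambda>h. f' h $ i)) (at a)"
  shows "(f has_derivative f') (at a)"
proof -
  have "((\<lambda>x. f x \<bullet> b) has_derivative (\<lambda>h. f' h \<bullet> b)) (at a)" if "b \<in> Basis" for b
  proof -
    obtain j u where b: "b = axis j u" "u \<in> Basis"
      using \<open>b \<in> Basis\<close> unfolding Basis_vec_def by auto
    have "((\<lambda>x. (f x $ j) \<bullet> u) has_derivative (\<lambda>h. (f' h $ j) \<bullet> u)) (at a)"
      by (rule has_derivative_inner_left[OF assms])
    then show ?thesis unfolding b inner_axis .
  qed
  then show ?thesis using has_derivative_componentwise_within[of f f' a UNIV] by simp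
qed

lemma has_derivative_vec_nth [derivative_intros]: "((\<lambda>x. x $ i) has_derivative (\<lambda>h. h $ i)) F"
  by (rule bounded_linear.has_derivative[OF bounded_linear_vec_nth has_derivative_ident])

definition cholo_at :: "(complex^'n \<Rightarrow> complex^'m) \<Rightarrow> complex^'n \<Rightarrow> bool" where
  "cholo_at f z \<longleftrightarrow> (\<exists>f'. (f has_derivative f') (at z) \<and> (\<forall>c v. f' (c *s v) = c *s f' v))"

lemma cholo_on_iff_cholo_at: "cholo_on S f \<longleftrightarrow> (\<forall>z\<in>S. cholo_at f z)"
  unfolding cholo_on_def cholo_at_def by simp

lemma cholo_at_compose:
  assumes "cholo_at f z" "cholo_at g (f z)"
  shows "cholo_at (g \<circ> f) z"
proof -
  obtain f' where f: "(f has_derivative f') (at z)" "\<forall>c v. f' (c *s v) = c *s f' v"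
    using assms(1) unfolding cholo_at_def by blast
  obtain g' where g: "(g has_derivative g') (at (f z))" "\<forall>c v. g' (c *s v) = c *s g' v"
    using assms(2) unfolding cholo_at_def by blast
  show ?thesis unfolding cholo_at_def
    by (rule exI[of _ "g' \<circ> f'"]) (use f g in \<open>auto intro: diff_chain_at\<close>)
qed

lemma scaleR_vector_smult_commute: "c *\<^sub>R (a *s (v::complex^'n)) = a *s (c *\<^sub>R v)"
  by (simp add: vec_eq_iff scaleR_conv_of_real)

lemma cholo_at_scaleR:
  assumes "cholo_at f z"
  shows "cholo_at (\<lambda>x. c *\<^sub>R f x) z"
proof -
  obtain f' where f: "(f has_derivative f') (at z)" "\<forall>a v. f' (a *s v) = a *s f' v"
    using assms unfolding cholo_at_def by blast
  show ?thesis unfolding cholo_at_def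
    by (rule exI[of _ "\<lambda>h. c *\<^sub>R f' h"])
      (use f in \<open>auto intro: has_derivative_scaleR_right simp: scaleR_vector_smult_commute\<close>)
qed

lemma cholo_at_id: "cholo_at (\<lambda>y. y) z"
  unfolding cholo_at_def by (auto intro: has_derivative_ident)

lemma cholo_at_imp_continuous: "cholo_at f z \<Longrightarrow> continuous (at z) f"
  unfolding cholo_at_def using has_derivative_continuous by blast

lemma continuous_on_if_cholo_at: "(\<And>z. cholo_at f z) \<Longrightarrow> continuous_on S f"
  by (simp add: continuous_at_imp_continuous_on cholo_at_imp_continuous)

definition Fmap_deriv ::
    "complex \<Rightarrow> nat \<Rightarrow> complex^('k::{finite,linorder}) \<Rightarrow> complex^('k::{finite,linorder}) \<Rightarrow> complex^('k::{finite,linorder})" where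
  "Fmap_deriv e d w h = (\<chi> i. if i = first_idx then e * h $ last_idx
                       else of_nat d * h $ i * (w $ i) ^ (d - 1) + e * h $ pred_idx i)"

lemma has_derivative_Fmap: "(Fmap e d has_derivative Fmap_deriv e d w) (at w)"
proof (rule has_derivative_vec_nthI)
  fix i
  show "((\<lambda>x. Fmap e d x $ i) has_derivative (\<lambda>h. Fmap_deriv e d w h $ i)) (at w)"
  proof (cases "i = first_idx")
    case True
    have "((\<lambda>x. e * x $ last_idx) has_derivative (\<lambda>h. e * h $ last_idx)) (at w)"
      by (intro derivative_eq_intros) auto
    then show ?thesis using True by (simp add: Fmap_def Fmap_deriv_def)
  next
    case False
    have "((\<lambda>x. (x $ i) ^ d + e * x $ pred_idx i) has_derivative
        (\<lambda>h. of_nat d * h $ i * (w $ i) ^ (d - 1) + e * h $ pred_idx i)) (at w)"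
      by (intro derivative_eq_intros) auto
    then show ?thesis using False by (simp add: Fmap_def Fmap_deriv_def)
  qed
qed

lemma Fmap_deriv_smult: "Fmap_deriv e d w (c *s v) = c *s Fmap_deriv e d w v"
  by (simp add: vec_eq_iff Fmap_deriv_def algebra_simps)

lemma cholo_at_Fmap: "cholo_at (Fmap e d) w"
  unfolding cholo_at_def using has_derivative_Fmap Fmap_deriv_smult by blast

fun Fmap_inv_rank_deriv ::
    "complex \<Rightarrow> nat \<Rightarrow> complex^('k::{finite,linorder}) \<Rightarrow> complex^('k::{finite,linorder}) \<Rightarrow> nat \<Rightarrow> complex" where
  "Fmap_inv_rank_deriv e d w h 0 = h $ first_idx / e"
| "Fmap_inv_rank_deriv e d w h (Suc n) =
     (h $ idx_of_rank n - of_nat d * Fmap_inv_rank_deriv e d w h n * Fmap_inv_rank e d w n ^ (d - 1)) / e"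

lemma has_derivative_Fmap_inv_rank:
  "((\<lambda>w. Fmap_inv_rank e d w n) has_derivative (\<lambda>h. Fmap_inv_rank_deriv e d w h n)) (at w)"
proof (induction n)
  case 0
  show ?case by (simp add: divide_inverse, intro derivative_eq_intros) auto
next
  case (Suc n)
  show ?case using Suc.IH by (simp add: divide_inverse, intro derivative_eq_intros) auto
qed

lemma Fmap_inv_rank_deriv_smult:
  "Fmap_inv_rank_deriv e d w (c *s v) n = c * Fmap_inv_rank_deriv e d w v n"
  by (induction n) (auto simp: algebra_simps)

lemma cholo_at_Fmap_inv: "cholo_at (Fmap_inv e d) w"
proof -
  have "(Fmap_inv e d has_derivative (\<lambda>h. \<chi> i. Fmap_inv_rank_deriv e d w h (idx_rank i))) (at w)"
    unfolding Fmap_inv_def by (rule has_derivative_vec_nthI) (simp add: has_derivative_Fmap_inv_rank)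
  then show ?thesis
    unfolding cholo_at_def by (auto simp: vec_eq_iff Fmap_inv_rank_deriv_smult)
qed

primrec Fiter_inv :: "(nat \<Rightarrow> complex) \<Rightarrow> nat \<Rightarrow> nat \<Rightarrow> complex^('k::{finite,linorder}) \<Rightarrow> complex^('k::{finite,linorder})"
  where
  "Fiter_inv eta d 0 = Fmap_inv (eta 0) d"
| "Fiter_inv eta d (Suc n) = Fiter_inv eta d n \<circ> Fmap_inv (eta (Suc n)) d"

lemma Fiter_inv_Fiter: "(\<And>n. eta n \<noteq> 0) \<Longrightarrow> Fiter_inv eta d n (Fiter eta d n z) = z"
  by (induction n arbitrary: z) (simp_all add: Fmap_inv_Fmap)

lemma Fiter_Fiter_inv: "(\<And>n. eta n \<noteq> 0) \<Longrightarrow> Fiter eta d n (Fiter_inv eta d n y) = y"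
  by (induction n arbitrary: y) (simp_all add: Fmap_Fmap_inv)

lemma cholo_at_Fiter: "cholo_at (Fiter eta d n) z"
  by (induction n arbitrary: z) (simp_all add: cholo_at_Fmap cholo_at_compose)

lemma cholo_at_Fiter_inv: "cholo_at (Fiter_inv eta d n) z"
  by (induction n arbitrary: z) (simp_all add: cholo_at_Fmap_inv cholo_at_compose)

primrec Fiter_deriv ::
    "(nat \<Rightarrow> complex) \<Rightarrow> nat \<Rightarrow> nat \<Rightarrow> complex^('k::{finite,linorder}) \<Rightarrow> complex^('k::{finite,linorder}) \<Rightarrow> complex^('k::{finite,linorder})" where
  "Fiter_deriv eta d 0 z = Fmap_deriv (eta 0) d z"
| "Fiter_deriv eta d (Suc n) z = Fmap_deriv (eta (Suc n)) d (Fiter eta d n z) \<circ> Fiter_deriv eta d n z"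

lemma has_derivative_Fiter: "(Fiter eta d n has_derivative Fiter_deriv eta d n z) (at z)"
proof (induction n)
  case 0
  then show ?case by (simp add: has_derivative_Fmap)
next
  case (Suc n)
  show ?case using diff_chain_at[OF Suc.IH has_derivative_Fmap] by (simp add: o_def)
qed

section \<open>The max norm\<close>

definition max_norm :: "complex^'n \<Rightarrow> real" where
  "max_norm x = Max (range (\<lambda>i. cmod (x $ i)))"

lemma norm_nth_le_max_norm: "cmod (x $ i) \<le> max_norm x"
  unfolding max_norm_def by (rule Max_ge) auto

lemma max_norm_attained: obtains i where "max_norm x = cmod (x $ i)"
proof -
  have "max_norm x \<in> range (\<lambda>i. cmod (x $ i))" unfolding max_norm_def by (rule Max_in) auto
  then show ?thesis using that by auto
qed

lemma max_norm_leI: "(\<And>i. cmod (x $ i) \<le> B) \<Longrightarrow> max_norm x \<le> B"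
  by (metis max_norm_attained)

lemma max_norm_nonneg: "0 \<le> max_norm x"
  using norm_nth_le_max_norm norm_ge_zero order_trans by blast

lemma max_norm_le_norm: "max_norm x \<le> norm x"
  by (metis max_norm_attained Finite_Cartesian_Product.norm_nth_le)

lemma norm_le_card_max_norm: "norm (x::complex^'n) \<le> real CARD('n) * max_norm x"
proof -
  have "norm x \<le> (\<Sum>i\<in>UNIV. norm (x $ i))"
    unfolding norm_vec_def by (rule L2_set_le_sum) simp
  also have "\<dots> \<le> (\<Sum>i\<in>(UNIV::'n set). max_norm x)"
    by (rule sum_mono) (simp add: norm_nth_le_max_norm)
  finally show ?thesis by simp
qed

lemma max_norm_le_add_norm_diff: "max_norm x \<le> max_norm y + norm (x - y)"
proof (rule max_norm_leI)
  fix i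
  have "cmod (x $ i) \<le> cmod (y $ i) + cmod ((x - y) $ i)"
    by (metis add.commute diff_add_cancel norm_triangle_ineq vector_minus_component)
  also have "\<dots> \<le> max_norm y + norm (x - y)"
    using norm_nth_le_max_norm[of y i] Finite_Cartesian_Product.norm_nth_le[of "x - y" i] by simp
  finally show "cmod (x $ i) \<le> max_norm y + norm (x - y)" .
qed

lemma continuous_on_max_norm: "continuous_on S max_norm"
proof -
  have "\<bar>max_norm x - max_norm y\<bar> \<le> norm (x - y)" for x y :: "complex^'n"
    using max_norm_le_add_norm_diff[of x y] max_norm_le_add_norm_diff[of y x]
    by (simp add: norm_minus_commute)
  then show ?thesis
    unfolding continuous_on_iff dist_real_def dist_norm by (meson le_less_trans)
qed

lemma max_norm_Fmap_le:
  "max_norm (Fmap e d (w::complex^('k::{finite,linorder}))) \<le> max_norm w ^ d + cmod e * max_norm w"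
proof (rule max_norm_leI)
  fix i :: 'k
  have w: "cmod (w $ i) ^ d \<le> max_norm w ^ d"
    by (rule power_mono[OF norm_nth_le_max_norm]) simp
  have e: "cmod (e * w $ j) \<le> cmod e * max_norm w" for j
    by (simp add: norm_mult mult_left_mono norm_nth_le_max_norm)
  show "cmod (Fmap e d w $ i) \<le> max_norm w ^ d + cmod e * max_norm w"
  proof (cases "i = first_idx")
    case True
    have "0 \<le> max_norm w ^ d" by (simp add: max_norm_nonneg)
    then show ?thesis using True e[of last_idx] by (simp add: Fmap_first_idx)
  next
    case False
    have "cmod ((w $ i) ^ d + e * w $ pred_idx i) \<le> cmod (w $ i) ^ d + cmod (e * w $ pred_idx i)"
      by (metis norm_power norm_triangle_ineq)
    then show ?thesis using False w e[of "pred_idx i"] by (simp add: Fmap_nth)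
  qed
qed

lemma max_norm_Fmap_deriv_le:
  "max_norm (Fmap_deriv e d w (h::complex^('k::{finite,linorder})))
     \<le> (real d * max_norm w ^ (d - 1) + cmod e) * max_norm h"
proof (rule max_norm_leI)
  fix i :: 'k
  have nonneg: "0 \<le> max_norm h" "0 \<le> max_norm w" by (rule max_norm_nonneg)+
  show "cmod (Fmap_deriv e d w h $ i) \<le> (real d * max_norm w ^ (d - 1) + cmod e) * max_norm h"
  proof (cases "i = first_idx")
    case True
    have "cmod (e * h $ last_idx) \<le> cmod e * max_norm h"
      by (simp add: norm_mult mult_left_mono norm_nth_le_max_norm)
    also have "\<dots> \<le> (real d * max_norm w ^ (d - 1) + cmod e) * max_norm h"
      using nonneg by (intro mult_right_mono) auto
    finally show ?thesis using True by (simp add: Fmap_deriv_def)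
  next
    case False
    have w: "cmod (w $ i) ^ (d - 1) \<le> max_norm w ^ (d - 1)"
      by (rule power_mono[OF norm_nth_le_max_norm]) simp
    have "cmod (of_nat d * h $ i * (w $ i) ^ (d - 1) + e * h $ pred_idx i)
        \<le> real d * cmod (h $ i) * cmod (w $ i) ^ (d - 1) + cmod e * cmod (h $ pred_idx i)"
      by (metis (no_types, lifting) norm_mult norm_of_nat norm_power norm_triangle_ineq)
    also have "\<dots> \<le> real d * max_norm h * max_norm w ^ (d - 1) + cmod e * max_norm h"
      using w nonneg by (intro add_mono mult_left_mono mult_mono norm_nth_le_max_norm) auto
    finally show ?thesis using False by (simp add: Fmap_deriv_def algebra_simps)
  qed
qed

lemma max_norm_Fmap_le_twice_pow:
  assumes "0 < A" "A \<le> 1" "cmod e \<le> A ^ d" "1 \<le> d"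
  shows "max (A ^ d) (max_norm (Fmap e d w)) \<le> 2 * max A (max_norm w) ^ d"
proof -
  define M where "M = max_norm w"
  define X where "X = max A M"
  have "0 \<le> M" unfolding M_def by (rule max_norm_nonneg)
  have pow: "M ^ d \<le> X ^ d" "A ^ d \<le> X ^ d"
    unfolding X_def using \<open>0 \<le> M\<close> \<open>0 < A\<close> by (auto intro: power_mono)
  have "cmod e * M \<le> X ^ d"
  proof (cases "M \<le> 1")
    case True
    then have "cmod e * M \<le> A ^ d * 1" using assms(1,3) \<open>0 \<le> M\<close> by (intro mult_mono) auto
    then show ?thesis using pow by simp
  next
    case False
    have "cmod e \<le> 1" using assms(1-3) by (meson order_trans power_le_one less_imp_le)
    then have "cmod e * M \<le> M" using \<open>0 \<le> M\<close> by (simp add: mult_left_le_one_le)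
    also have "M \<le> M ^ d" using False assms(4) by (simp add: power_increasing[of 1 d M, simplified])
    finally show ?thesis using pow by simp
  qed
  then have "max_norm (Fmap e d w) \<le> 2 * X ^ d"
    using max_norm_Fmap_le[of e d w] pow unfolding M_def by simp
  moreover have "0 \<le> X ^ d" unfolding X_def using \<open>0 < A\<close> by simp
  ultimately show ?thesis using pow unfolding X_def M_def by simp
qed

lemma max_norm_Fiter_tendsto_0:
  assumes "z \<in> basin eta d"
  shows "(\<lambda>n. max_norm (Fiter eta d n (z::complex^('k::{finite,linorder})))) \<longlonglongrightarrow> 0"
proof -
  have "(\<lambda>n. norm (Fiter eta d n z)) \<longlonglongrightarrow> 0"
    using assms unfolding basin_def by (simp add: tendsto_norm_zero)
  then show ?thesis
    by (rule Lim_null_comparison[OF always_eventually, rotated])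
      (simp add: max_norm_nonneg max_norm_le_norm)
qed

section \<open>Contraction near the origin\<close>

lemma norm_Fmap_le_half:
  fixes w :: "complex^('k::{finite,linorder})"
  assumes "d \<ge> 2" and e: "cmod e \<le> 1 / (4 * real CARD('k))" and w: "norm w < 1 / (4 * real CARD('k))"
  shows "norm (Fmap e d w) \<le> norm w / 2"
proof -
  define K where "K = real CARD('k)"
  define M where "M = max_norm w"
  have K: "K \<ge> 1" unfolding K_def by simp
  have M: "0 \<le> M" "M \<le> norm w" unfolding M_def by (rule max_norm_nonneg, rule max_norm_le_norm)
  have r: "1 / (4 * K) \<le> 1" using K by simp
  have Mr: "M < 1 / (4 * K)" using M w unfolding K_def by simp
  have "M ^ (d - 1) \<le> M ^ 1" using assms(1) M Mr r by (intro power_decreasing) auto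
  then have Md: "M ^ (d - 1) \<le> 1 / (4 * K)" using Mr by simp
  have "norm (Fmap e d w) \<le> K * max_norm (Fmap e d w)"
    unfolding K_def by (rule norm_le_card_max_norm)
  also have "\<dots> \<le> K * (M ^ d + cmod e * M)"
    using max_norm_Fmap_le[of e d w] K unfolding M_def by simp
  also have "M ^ d = M ^ (d - 1) * M"
    using assms(1) by (simp add: power_Suc2[symmetric])
  also have "K * (M ^ (d - 1) * M + cmod e * M) = K * (M ^ (d - 1) + cmod e) * M"
    by (simp add: algebra_simps)
  also have "\<dots> \<le> K * (1 / (4 * K) + 1 / (4 * K)) * M"
    using Md e K M unfolding K_def by (intro mult_right_mono mult_left_mono add_mono) auto
  also have "\<dots> = M / 2" using K by (simp add: field_simps)
  finally show ?thesis using M by simp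
qed

lemma Fiter_halving:
  fixes z :: "complex^('k::{finite,linorder})"
  assumes contracting: "\<And>n w::complex^('k::{finite,linorder}). N \<le> n \<Longrightarrow> norm w < r \<Longrightarrow>
      norm (Fmap (eta n) d w) \<le> norm w / 2"
    and "N \<le> n" and small: "norm (Fiter eta d n z) < r"
  shows "norm (Fiter eta d (n + m) z) \<le> (1/2) ^ m * norm (Fiter eta d n z)"
proof (induction m)
  case 0
  then show ?case by simp
next
  case (Suc m)
  have "(1/2) ^ m * norm (Fiter eta d n z) \<le> norm (Fiter eta d n z)"
    by (simp add: mult_left_le_one_le power_le_one)
  then have "norm (Fiter eta d (n + m) z) < r" using Suc.IH small by linarith
  then have "norm (Fiter eta d (n + Suc m) z) \<le> norm (Fiter eta d (n + m) z) / 2"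
    using contracting[of "Suc (n + m)"] \<open>N \<le> n\<close> by simp
  with Suc.IH show ?case by simp
qed

lemma mem_basin_if_Fiter_small:
  fixes z :: "complex^('k::{finite,linorder})"
  assumes contracting: "\<And>n w::complex^('k::{finite,linorder}). N \<le> n \<Longrightarrow> norm w < r \<Longrightarrow>
      norm (Fmap (eta n) d w) \<le> norm w / 2"
    and "N \<le> n" and "norm (Fiter eta d n z) < r"
  shows "z \<in> basin eta d"
proof -
  have lim: "(\<lambda>m. (1/2::real) ^ m * norm (Fiter eta d n z)) \<longlonglongrightarrow> 0"
    by (intro tendsto_mult_left_zero LIMSEQ_realpow_zero) auto
  have bound: "\<forall>m. norm (norm (Fiter eta d (m + n) z)) \<le> (1/2) ^ m * norm (Fiter eta d n z)"
    using Fiter_halving[OF assms] by (simp add: add.commute)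
  have "(\<lambda>m. norm (Fiter eta d (m + n) z)) \<longlonglongrightarrow> 0"
    by (rule Lim_null_comparison[OF always_eventually[OF bound] lim])
  then have "(\<lambda>m. Fiter eta d (m + n) z) \<longlonglongrightarrow> 0"
    by (rule tendsto_norm_zero_cancel)
  then show ?thesis unfolding basin_def by (simp add: LIMSEQ_offset)
qed

lemma basin_eq_Union_Fiter_preimage:
  fixes N :: nat
  assumes contracting: "\<And>n w::complex^('k::{finite,linorder}). N \<le> n \<Longrightarrow> norm w < r \<Longrightarrow>
      norm (Fmap (eta n) d w) \<le> norm w / 2"
    and "r > 0"
  shows "(basin eta d :: (complex^('k::{finite,linorder})) set) = (\<Union>j\<in>{1..}. Fiter eta d (N + j) -` ball 0 r)"
proof (intro set_eqI iffI)
  fix z :: "complex^('k::{finite,linorder})"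
  assume "z \<in> basin eta d"
  then have "(\<lambda>n. Fiter eta d n z) \<longlonglongrightarrow> 0" unfolding basin_def by simp
  then obtain n where "\<forall>m\<ge>n. norm (Fiter eta d m z) < r"
    using \<open>r > 0\<close> unfolding LIMSEQ_iff by auto
  then have "z \<in> Fiter eta d (N + (n + 1)) -` ball 0 r"
    by (simp del: Fiter.simps)
  then show "z \<in> (\<Union>j\<in>{1..}. Fiter eta d (N + j) -` ball 0 r)"
    by (rule UN_I[rotated]) simp
next
  fix z :: "complex^('k::{finite,linorder})"
  assume "z \<in> (\<Union>j\<in>{1..}. Fiter eta d (N + j) -` ball 0 r)"
  then obtain j where "norm (Fiter eta d (N + j) z) < r" by auto
  then show "z \<in> basin eta d"
    using mem_basin_if_Fiter_small[OF contracting, where n = "N + j"] by simp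
qed

lemma Fiter_preimage_ball_mono:
  assumes contracting: "\<And>n w::complex^('k::{finite,linorder}). N \<le> n \<Longrightarrow> norm w < r \<Longrightarrow>
      norm (Fmap (eta n) d w) \<le> norm w / 2"
  shows "Fiter eta d (N + j) -` ball 0 r \<subseteq> (Fiter eta d (N + Suc j) -` ball 0 r :: (complex^('k::{finite,linorder})) set)"
proof
  fix z :: "complex^('k::{finite,linorder})"
  assume "z \<in> Fiter eta d (N + j) -` ball 0 r"
  then have small: "norm (Fiter eta d (N + j) z) < r" by simp
  have "norm (Fiter eta d (N + Suc j) z) * 2 \<le> norm (Fiter eta d (N + j) z)"
    using Fiter_halving[OF contracting le_add1 small, of 1] by simp
  then have "norm (Fiter eta d (N + Suc j) z) < r"
    using small by (smt (verit) norm_ge_zero)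
  then show "z \<in> Fiter eta d (N + Suc j) -` ball 0 r" by simp
qed

lemma biholomorphic_Fiter_preimage_ball:
  assumes eta: "\<And>n. eta n \<noteq> 0" and "r > 0"
  shows "biholomorphic (Fiter eta d n -` ball 0 r :: (complex^('k::{finite,linorder})) set)
                       (ball 0 1 :: (complex^('k::{finite,linorder})) set)"
    (is "biholomorphic ?U _")
proof -
  define U where "U = ?U"
  define f where "f x = (1 / r) *\<^sub>R Fiter eta d n x" for x :: "complex^('k::{finite,linorder})"
  define g where "g y = Fiter_inv eta d n (r *\<^sub>R y)" for y :: "complex^('k::{finite,linorder})"
  have gf: "g (f z) = z" for z
    unfolding f_def g_def using \<open>r > 0\<close> by (simp add: Fiter_inv_Fiter[OF eta])
  have fg: "f (g w) = w" for w
    unfolding f_def g_def using \<open>r > 0\<close> by (simp add: Fiter_Fiter_inv[OF eta])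
  have f_iff: "f z \<in> ball 0 1 \<longleftrightarrow> z \<in> U" for z
    unfolding f_def U_def using \<open>r > 0\<close> by (simp add: divide_simps)
  have "f ` U = ball 0 1"
  proof
    show "f ` U \<subseteq> ball 0 1" using f_iff by blast
    show "ball 0 1 \<subseteq> f ` U" using f_iff fg by (metis image_eqI subsetI)
  qed
  moreover have "g ` ball 0 1 = U"
  proof
    show "g ` ball 0 1 \<subseteq> U" using f_iff fg by (metis image_subsetI)
    show "U \<subseteq> g ` ball 0 1" using f_iff gf by (metis image_eqI subsetI)
  qed
  moreover have "cholo_on U f"
    unfolding cholo_on_iff_cholo_at f_def by (simp add: cholo_at_scaleR cholo_at_Fiter)
  moreover have "cholo_at g y" for y
    using cholo_at_compose[OF cholo_at_scaleR[OF cholo_at_id] cholo_at_Fiter_inv]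
    unfolding g_def o_def .
  then have "cholo_on (ball 0 1) g" unfolding cholo_on_iff_cholo_at by simp
  moreover have "open U"
    unfolding U_def by (rule open_vimage[OF open_ball continuous_on_if_cholo_at[OF cholo_at_Fiter]])
  ultimately have "biholomorphic U (ball (0::complex^('k::{finite,linorder})) 1)"
    unfolding biholomorphic_def using gf fg open_ball by blast
  then show ?thesis unfolding U_def .
qed

lemma connected_if_biholomorphic_ball:
  assumes "biholomorphic U (ball (0::complex^'n) 1)"
  shows "connected U"
proof -
  obtain g where "cholo_on (ball (0::complex^'n) 1) g" "g ` ball 0 1 = U"
    using assms unfolding biholomorphic_def by blast
  then have "continuous_on (ball 0 1) g"
    unfolding cholo_on_iff_cholo_at
    by (simp add: cholo_at_imp_continuous continuous_at_imp_continuous_on)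
  then show ?thesis using \<open>g ` ball 0 1 = U\<close> connected_continuous_image by blast
qed

section \<open>Holomorphic discs and the Kobayashi metric\<close>

lemma norm_vector_smult: "norm (c *s (u::complex^'n)) = cmod c * norm u"
  unfolding norm_vec_def by (simp add: norm_mult L2_set_right_distrib)

lemma scaleR_eq_of_real_smult: "c *\<^sub>R (x::complex^'n) = complex_of_real c *s x"
  unfolding vec_eq_iff vector_scaleR_component vector_smult_component by (simp add: scaleR_conv_of_real)

lemma has_derivative_complex_line:
  "((\<lambda>h::complex. p + h *s (u::complex^'n)) has_derivative (\<lambda>h. h *s u)) (at w)"
proof -
  have "((\<lambda>h::complex. h *s u) has_derivative (\<lambda>h. h *s u)) (at w)"
    by (rule has_derivative_vec_nthI) (auto intro!: derivative_eq_intros)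
  then show ?thesis by (intro derivative_eq_intros) auto
qed

lemma has_derivative_along_complex_line:
  fixes p u :: "complex^'n"
  assumes "(g has_derivative D) (at (p + w *s u))" and "\<forall>c x. D (c *s x) = c *s D x"
  shows "((\<lambda>h. g (p + h *s u)) has_derivative (\<lambda>h. h *s D u)) (at w)"
  using diff_chain_at[OF has_derivative_complex_line[of p u w] assms(1)] assms(2) by (simp add: o_def)

lemma disc_holo_on_along_complex_line:
  fixes p u :: "complex^'n"
  assumes "\<And>y. cholo_at g y"
  shows "disc_holo_on S (\<lambda>h. g (p + h *s u))"
  unfolding disc_holo_on_def
proof
  fix w
  obtain D where "(g has_derivative D) (at (p + w *s u))" "\<forall>c x. D (c *s x) = c *s D x"
    using assms unfolding cholo_at_def by blast
  then show "\<exists>v. ((\<lambda>h. g (p + h *s u)) has_derivative (\<lambda>h. h *s v)) (at w)"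
    using has_derivative_along_complex_line by blast
qed

lemma kobayashi_eq_0I:
  assumes discs: "\<And>\<epsilon>. \<epsilon> > 0 \<Longrightarrow> \<exists>f. disc_holo_on (ball 0 1) f \<and> f ` ball 0 1 \<subseteq> \<Omega> \<and> f 0 = z \<and>
      (f has_derivative (\<lambda>h. h *s ((1 / \<epsilon>) *\<^sub>R v))) (at 0)"
  shows "kobayashi \<Omega> z v = 0"
proof -
  define S where "S = {\<alpha>::real. \<alpha> > 0 \<and>
     (\<exists>f. disc_holo_on (ball 0 1) f \<and> f ` ball 0 1 \<subseteq> \<Omega> \<and> f 0 = z \<and>
          (f has_derivative (\<lambda>h. h *s ((1 / \<alpha>) *\<^sub>R v))) (at 0))}"
  have pos_in_S: "\<epsilon> \<in> S" if "\<epsilon> > 0" for \<epsilon>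
    unfolding S_def using discs[OF that] that by blast
  have "bdd_below S" unfolding S_def by (rule bdd_belowI[of _ 0]) auto
  then have "Inf S \<le> \<epsilon>" if "\<epsilon> > 0" for \<epsilon> using cInf_lower pos_in_S that by blast
  moreover have "S \<noteq> {}" using pos_in_S[of 1] by auto
  then have "0 \<le> Inf S" by (rule cInf_greatest) (simp add: S_def)
  ultimately have "Inf S = 0" by (meson dense not_le order.antisym)
  then show ?thesis unfolding kobayashi_def S_def .
qed

lemma Fiter_inv_deriv_Fiter_deriv:
  assumes "\<And>n. eta n \<noteq> 0" and "(Fiter_inv eta d n has_derivative D) (at (Fiter eta d n z))"
  shows "D (Fiter_deriv eta d n z v) = v"
proof -
  have chain: "((Fiter_inv eta d n \<circ> Fiter eta d n) has_derivative (D \<circ> Fiter_deriv eta d n z)) (at z)"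
    by (rule diff_chain_at[OF has_derivative_Fiter assms(2)])
  have inverse: "Fiter_inv eta d n \<circ> Fiter eta d n = (\<lambda>x. x)"
    by (simp add: fun_eq_iff Fiter_inv_Fiter[OF assms(1)])
  from chain have "((\<lambda>x. x) has_derivative (D \<circ> Fiter_deriv eta d n z)) (at z)"
    unfolding inverse .
  then have "D \<circ> Fiter_deriv eta d n z = (\<lambda>x. x)"
    using has_derivative_ident has_derivative_unique by blast
  then show ?thesis by (metis comp_apply)
qed

text \<open>The disc is the pull-back under F(n) of the complex line through F(n)(z) in the direction
  DF(n)(z) v / epsilon; when both are small it stays in the ball on which the tail of the sequence
  contracts, hence in the basin.\<close>

lemma holomorphic_disc_in_basin:
  fixes z v :: "complex^('k::{finite,linorder})"
  assumes eta: "\<And>n. eta n \<noteq> 0"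
    and contracting: "\<And>n w::complex^('k::{finite,linorder}). N \<le> n \<Longrightarrow> norm w < r \<Longrightarrow>
      norm (Fmap (eta n) d w) \<le> norm w / 2"
    and "N \<le> n" and "\<epsilon> > 0" and small: "norm (Fiter eta d n z) < r / 2"
    and deriv_small: "norm (Fiter_deriv eta d n z v) < \<epsilon> * r / 2"
  shows "\<exists>f. disc_holo_on (ball 0 1) f \<and> f ` ball 0 1 \<subseteq> basin eta d \<and> f 0 = z \<and>
      (f has_derivative (\<lambda>h. h *s ((1 / \<epsilon>) *\<^sub>R v))) (at 0)"
proof -
  define p where "p = Fiter eta d n z"
  define u where "u = (1 / \<epsilon>) *\<^sub>R Fiter_deriv eta d n z v"
  define f where "f h = Fiter_inv eta d n (p + h *s u)" for h
  obtain D where D: "(Fiter_inv eta d n has_derivative D) (at p)" "\<forall>c w. D (c *s w) = c *s D w"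
    using cholo_at_Fiter_inv unfolding cholo_at_def by blast
  have "D u = (1 / \<epsilon>) *\<^sub>R v"
    using D(2) Fiter_inv_deriv_Fiter_deriv[OF eta D(1)[unfolded p_def]]
    unfolding u_def scaleR_eq_of_real_smult by simp
  moreover have "(f has_derivative (\<lambda>h. h *s D u)) (at 0)"
    unfolding f_def using has_derivative_along_complex_line[of _ D p 0 u] D by simp
  moreover have "disc_holo_on (ball 0 1) f"
    unfolding f_def by (rule disc_holo_on_along_complex_line[OF cholo_at_Fiter_inv])
  moreover have "f ` ball 0 1 \<subseteq> basin eta d"
  proof
    fix y
    assume "y \<in> f ` ball 0 1"
    then obtain h where h: "cmod h < 1" "y = f h" by auto
    have "norm (p + h *s u) \<le> norm p + cmod h * norm u"
      using norm_triangle_ineq[of p "h *s u"] by (simp add: norm_vector_smult)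
    also have "\<dots> \<le> norm p + norm u"
      using h(1) by (simp add: mult_left_le_one_le)
    also have "\<dots> < r"
    proof -
      have "norm u < r / 2" using deriv_small \<open>\<epsilon> > 0\<close> unfolding u_def by (simp add: field_simps)
      then show ?thesis using small unfolding p_def by simp
    qed
    finally have "norm (Fiter eta d n y) < r"
      using h(2) by (simp add: f_def Fiter_Fiter_inv[OF eta])
    with contracting \<open>N \<le> n\<close> show "y \<in> basin eta d" by (rule mem_basin_if_Fiter_small)
  qed
  moreover have "f 0 = z" by (simp add: f_def p_def Fiter_inv_Fiter[OF eta])
  ultimately show ?thesis by auto
qed

lemma LIMSEQ_zero_by_ratio_bound:
  fixes x q :: "nat \<Rightarrow> real"
  assumes nonneg: "\<And>n. 0 \<le> x n" and ratio: "\<And>n. x (Suc n) \<le> q n * x n" and "q \<longlonglongrightarrow> 0"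
  shows "x \<longlonglongrightarrow> 0"
proof -
  have "eventually (\<lambda>n. q n < 1/2) sequentially"
    using order_tendstoD(2)[OF \<open>q \<longlonglongrightarrow> 0\<close>, of "1/2"] by simp
  then obtain n0 where n0: "\<And>n. n \<ge> n0 \<Longrightarrow> q n \<le> 1/2"
    unfolding eventually_sequentially by (meson less_imp_le)
  have bound: "\<forall>m. norm (x (m + n0)) \<le> (1/2) ^ m * x n0"
  proof
    fix m
    show "norm (x (m + n0)) \<le> (1/2) ^ m * x n0"
    proof (induction m)
      case (Suc m)
      have "q (m + n0) * x (m + n0) \<le> 1/2 * x (m + n0)"
        using n0[of "m + n0"] nonneg[of "m + n0"] by (intro mult_right_mono) auto
      then have "x (Suc m + n0) \<le> 1/2 * x (m + n0)"
        using ratio[of "m + n0"] by simp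
      with Suc nonneg show ?case by simp
    qed (simp add: nonneg)
  qed
  have "(\<lambda>m. (1/2::real) ^ m * x n0) \<longlonglongrightarrow> 0"
    by (intro tendsto_mult_left_zero LIMSEQ_realpow_zero) auto
  then have "(\<lambda>m. x (m + n0)) \<longlonglongrightarrow> 0"
    by (rule Lim_null_comparison[OF always_eventually[OF bound]])
  then show ?thesis by (rule LIMSEQ_offset)
qed

section \<open>Jensen's inequality\<close>

lemma holomorphic_mean_value_circle:
  fixes g :: "complex \<Rightarrow> complex"
  assumes "continuous_on (cball 0 1) g" and "g holomorphic_on ball 0 1"
  shows "((\<lambda>t. g (cis t)) has_integral (2 * pi * g 0)) {0..2*pi}"
proof -
  have "((\<lambda>u. g u / (u - 0)) has_contour_integral (2 * of_real pi * \<i> * g 0)) (circlepath 0 1)"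
    by (rule Cauchy_integral_circlepath[OF assms]) simp
  then have "((\<lambda>t. g (0 + 1 * cis t) / (0 + 1 * cis t - 0) * 1 * \<i> * cis t) has_integral
      (2 * of_real pi * \<i> * g 0)) {0..2*pi}"
    unfolding circlepath_def by (subst (asm) has_contour_integral_part_circlepath_iff) auto
  then have "((\<lambda>t. \<i> * g (cis t)) has_integral (\<i> * (2 * pi * g 0))) {0..2*pi}"
    by (simp add: field_simps)
  then have "((\<lambda>t. (- \<i>) * (\<i> * g (cis t))) has_integral ((- \<i>) * (\<i> * (2 * pi * g 0)))) {0..2*pi}"
    by (rule has_integral_mult_right)
  then show ?thesis by simp
qed

lemma has_integral_ln_norm_one_minus_circle:
  fixes c :: complex
  assumes "cmod c < 1"
  shows "((\<lambda>t. ln (cmod (1 - c * cis t))) has_integral 0) {0..2*pi}"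
proof -
  define g where "g \<zeta> = Ln (1 - c * \<zeta>)" for \<zeta>
  have Re_pos: "0 < Re (1 - c * \<zeta>)" if "\<zeta> \<in> cball 0 1" for \<zeta>
  proof -
    have "cmod (c * \<zeta>) \<le> cmod c"
      using that by (simp add: norm_mult mult_right_le_one_le)
    then have "cmod (c * \<zeta>) < 1" using assms by simp
    then show ?thesis using complex_Re_le_cmod[of "c * \<zeta>"] by simp
  qed
  have "1 - c * \<zeta> \<notin> \<real>\<^sub>\<le>\<^sub>0" if "\<zeta> \<in> cball 0 1" for \<zeta>
    using Re_pos[OF that] by (auto simp: complex_nonpos_Reals_iff)
  then have "continuous_on (cball 0 1) g" "g holomorphic_on ball 0 1"
    unfolding g_def by (intro continuous_intros holomorphic_intros; auto)+
  then have "((\<lambda>t. g (cis t)) has_integral (2 * pi * g 0)) {0..2*pi}"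
    by (rule holomorphic_mean_value_circle)
  then have "((Re \<circ> (\<lambda>t. g (cis t))) has_integral Re (2 * pi * g 0)) {0..2*pi}"
    by (rule has_integral_linear[OF _ bounded_linear_Re])
  moreover have "Re (g (cis t)) = ln (cmod (1 - c * cis t))" for t
  proof -
    have "0 < Re (1 - c * cis t)" by (rule Re_pos) simp
    then have "1 - c * cis t \<noteq> 0" by (metis less_irrefl zero_complex.sel(1))
    then show ?thesis unfolding g_def by simp
  qed
  ultimately show ?thesis by (simp add: g_def o_def)
qed

lemma has_integral_ln_norm_circle_minus:
  fixes r :: complex and s :: real
  assumes "s > 0" and "cmod r \<noteq> s"
  shows "((\<lambda>t. ln (cmod (of_real s * cis t - r))) has_integral (2 * pi * ln (max (cmod r) s))) {0..2*pi}"
proof (cases "cmod r > s")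
  case True
  define c where "c = of_real s / r"
  have "r \<noteq> 0" using True \<open>s > 0\<close> by auto
  have c: "cmod c < 1" unfolding c_def using True \<open>s > 0\<close> by (simp add: norm_divide divide_less_eq)
  have "cmod (of_real s * cis t - r) = cmod r * cmod (1 - c * cis t)" for t
  proof -
    have "of_real s * cis t - r = (- r) * (1 - c * cis t)"
      unfolding c_def using \<open>r \<noteq> 0\<close> by (simp add: field_simps)
    then show ?thesis by (simp add: norm_mult)
  qed
  moreover have "1 - c * cis t \<noteq> 0" for t
    using c by (metis norm_cis norm_mult norm_one mult_1_right less_irrefl right_minus_eq)
  ultimately have "ln (cmod (of_real s * cis t - r)) = ln (cmod r) + ln (cmod (1 - c * cis t))" for t
    using \<open>r \<noteq> 0\<close> by (simp add: ln_mult)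
  moreover have "((\<lambda>t. ln (cmod r) + ln (cmod (1 - c * cis t))) has_integral (2 * pi * ln (cmod r) + 0)) {0..2*pi}"
    using has_integral_const_real[of "ln (cmod r)" 0 "2*pi"]
    by (intro has_integral_add has_integral_ln_norm_one_minus_circle[OF c]) (simp add: mult.commute)
  ultimately show ?thesis using True by simp
next
  case False
  then have "cmod r < s" using assms(2) by simp
  define c where "c = cnj r / of_real s"
  have c: "cmod c < 1" unfolding c_def using \<open>cmod r < s\<close> \<open>s > 0\<close> by (simp add: norm_divide divide_less_eq)
  have "cmod (of_real s * cis t - r) = s * cmod (1 - c * cis t)" for t
  proof -
    have "cis t * cnj (cis t) = 1" by (simp add: cis_cnj cis_mult)
    then have "cnj (of_real s * cis t - r) = cis (- t) * (of_real s * (1 - c * cis t))"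
      unfolding c_def using \<open>s > 0\<close> by (simp add: field_simps cis_mult flip: cis_cnj)
    then show ?thesis
      using \<open>s > 0\<close> by (metis abs_of_pos complex_mod_cnj norm_cis norm_mult norm_of_real mult_1)
  qed
  moreover have "1 - c * cis t \<noteq> 0" for t
    using c by (metis norm_cis norm_mult norm_one mult_1_right less_irrefl right_minus_eq)
  ultimately have "ln (cmod (of_real s * cis t - r)) = ln s + ln (cmod (1 - c * cis t))" for t
    using \<open>s > 0\<close> by (simp add: ln_mult)
  moreover have "((\<lambda>t. ln s + ln (cmod (1 - c * cis t))) has_integral (2 * pi * ln s + 0)) {0..2*pi}"
    using has_integral_const_real[of "ln s" 0 "2*pi"]
    by (intro has_integral_add has_integral_ln_norm_one_minus_circle[OF c]) (simp add: mult.commute)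
  ultimately show ?thesis using \<open>cmod r < s\<close> by simp
qed

lemma ln_norm_poly_eq:
  fixes p :: "complex poly"
  assumes "p \<noteq> 0" and "poly p \<zeta> \<noteq> 0"
  shows "ln (cmod (poly p \<zeta>)) = ln (cmod (lead_coeff p)) +
           (\<Sum>r\<in>{z. poly p z = 0}. real (order r p) * ln (cmod (\<zeta> - r)))"
proof -
  define R where "R = {z. poly p z = 0}"
  have "finite R" unfolding R_def by (rule poly_roots_finite[OF assms(1)])
  have nonzero: "\<zeta> - r \<noteq> 0" if "r \<in> R" for r using that assms(2) unfolding R_def by auto
  have "poly p \<zeta> = lead_coeff p * (\<Prod>r\<in>R. (\<zeta> - r) ^ order r p)"
    by (subst complex_poly_decompose[symmetric]) (simp add: R_def poly_prod)
  then have "cmod (poly p \<zeta>) = cmod (lead_coeff p) * (\<Prod>r\<in>R. cmod (\<zeta> - r) ^ order r p)"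
    by (simp add: norm_mult norm_power flip: prod_norm)
  moreover have "0 < (\<Prod>r\<in>R. cmod (\<zeta> - r) ^ order r p)"
    by (rule prod_pos) (use nonzero in auto)
  ultimately have "ln (cmod (poly p \<zeta>)) = ln (cmod (lead_coeff p)) + ln (\<Prod>r\<in>R. cmod (\<zeta> - r) ^ order r p)"
    using assms(1) by (simp add: ln_mult)
  also have "ln (\<Prod>r\<in>R. cmod (\<zeta> - r) ^ order r p) = (\<Sum>r\<in>R. real (order r p) * ln (cmod (\<zeta> - r)))"
    using \<open>finite R\<close> nonzero by (simp add: ln_prod ln_realpow)
  finally show ?thesis unfolding R_def .
qed

lemma poly_jensen_inequality:
  fixes p :: "complex poly" and s :: real
  assumes p0: "poly p 0 \<noteq> 0" and "s > 0" and no_root: "\<And>z. poly p z = 0 \<Longrightarrow> cmod z \<noteq> s"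
  shows "2 * pi * ln (cmod (poly p 0)) \<le> integral {0..2*pi} (\<lambda>t. ln (cmod (poly p (of_real s * cis t))))"
proof -
  define R where "R = {z. poly p z = 0}"
  define L where "L = ln (cmod (lead_coeff p))"
  have "p \<noteq> 0" using p0 by auto
  have "finite R" unfolding R_def by (rule poly_roots_finite[OF \<open>p \<noteq> 0\<close>])
  have root: "r \<noteq> 0" "cmod r \<noteq> s" if "r \<in> R" for r
    using that p0 no_root unfolding R_def by auto
  have "ln (cmod (poly p (of_real s * cis t))) =
      L + (\<Sum>r\<in>R. real (order r p) * ln (cmod (of_real s * cis t - r)))" for t
  proof -
    have "cmod (of_real s * cis t) = s" using \<open>s > 0\<close> by (simp add: norm_mult)
    then have "poly p (of_real s * cis t) \<noteq> 0" using no_root by blast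
    then show ?thesis unfolding L_def R_def by (rule ln_norm_poly_eq[OF \<open>p \<noteq> 0\<close>])
  qed
  moreover have "((\<lambda>t. L + (\<Sum>r\<in>R. real (order r p) * ln (cmod (of_real s * cis t - r)))) has_integral
      (2 * pi * L + (\<Sum>r\<in>R. real (order r p) * (2 * pi * ln (max (cmod r) s))))) {0..2*pi}"
    using has_integral_const_real[of L 0 "2*pi"] root(2)
    by (intro has_integral_add has_integral_sum[OF \<open>finite R\<close>] has_integral_mult_right
        has_integral_ln_norm_circle_minus[OF \<open>s > 0\<close>]) (auto simp: mult.commute)
  ultimately have integral: "integral {0..2*pi} (\<lambda>t. ln (cmod (poly p (of_real s * cis t)))) =
      2 * pi * L + (\<Sum>r\<in>R. real (order r p) * (2 * pi * ln (max (cmod r) s)))"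
    by (simp add: integral_unique)
  have "2 * pi * ln (cmod (poly p 0)) = 2 * pi * L + (\<Sum>r\<in>R. real (order r p) * (2 * pi * ln (cmod r)))"
    using ln_norm_poly_eq[OF \<open>p \<noteq> 0\<close> p0] unfolding L_def R_def
    by (simp add: algebra_simps sum_distrib_left)
  also have "\<dots> \<le> 2 * pi * L + (\<Sum>r\<in>R. real (order r p) * (2 * pi * ln (max (cmod r) s)))"
    using root(1) by (intro add_left_mono sum_mono mult_left_mono ln_mono) auto
  finally show ?thesis unfolding integral .
qed

lemma poly_ln_max_submean_radius:
  fixes p :: "complex poly" and s B :: real
  assumes p0: "poly p 0 \<noteq> 0" and "s > 0" and "B > 0"
    and no_root: "\<And>z. poly p z = 0 \<Longrightarrow> cmod z \<noteq> s"
  shows "2 * pi * ln (cmod (poly p 0)) \<le>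
    integral {0..2*pi} (\<lambda>t. ln (max B (cmod (poly p (of_real s * cis t)))))"
proof -
  have nonzero: "poly p (of_real s * cis t) \<noteq> 0" for t
    using no_root[of "of_real s * cis t"] \<open>s > 0\<close> by (auto simp: norm_mult)
  have "2 * pi * ln (cmod (poly p 0)) \<le> integral {0..2*pi} (\<lambda>t. ln (cmod (poly p (of_real s * cis t))))"
    by (rule poly_jensen_inequality[OF p0 \<open>s > 0\<close> no_root])
  also have "\<dots> \<le> integral {0..2*pi} (\<lambda>t. ln (max B (cmod (poly p (of_real s * cis t)))))"
  proof (rule integral_le)
    show "(\<lambda>t. ln (cmod (poly p (of_real s * cis t)))) integrable_on {0..2*pi}"
      using nonzero by (intro integrable_continuous_interval continuous_intros continuous_on_ln) auto
    show "(\<lambda>t. ln (max B (cmod (poly p (of_real s * cis t))))) integrable_on {0..2*pi}"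
      using \<open>B > 0\<close> by (intro integrable_continuous_interval continuous_intros continuous_on_ln) auto
    show "ln (cmod (poly p (of_real s * cis t))) \<le> ln (max B (cmod (poly p (of_real s * cis t))))" for t
      using nonzero[of t] \<open>B > 0\<close> by (subst ln_le_cancel_iff) auto
  qed
  finally show ?thesis .
qed

text \<open>Zeros of p on the unit circle are avoided by letting the radius tend to 1; taking the max
  with B removes the logarithmic singularities, so the integral is continuous in the radius.\<close>

lemma poly_ln_max_submean:
  fixes p :: "complex poly" and B :: real
  assumes p0: "poly p 0 \<noteq> 0" and "B > 0"
  shows "2 * pi * ln (cmod (poly p 0)) \<le> integral {0..2*pi} (\<lambda>t. ln (max B (cmod (poly p (cis t)))))"
proof -
  define I where "I s = integral (cbox 0 (2*pi)) (\<lambda>t. ln (max B (cmod (poly p (of_real s * cis t)))))"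
    for s :: real
  have "continuous_on (UNIV \<times> cbox 0 (2*pi))
      (\<lambda>(s, t). ln (max B (cmod (poly p (of_real s * cis t)))))"
    unfolding split_beta using \<open>B > 0\<close>
    by (intro continuous_intros continuous_on_ln) auto
  then have "continuous_on UNIV I"
    unfolding I_def by (rule integral_continuous_on_param)
  then have "(I \<longlongrightarrow> I 1) (at_left 1)"
    by (simp add: continuous_on_eq_continuous_at isCont_def filterlim_at_split)
  moreover have "eventually (\<lambda>s. 2 * pi * ln (cmod (poly p 0)) \<le> I s) (at_left 1)"
  proof -
    define R where "R = {z. poly p z = 0}"
    have "finite (cmod ` R)"
      unfolding R_def using poly_roots_finite p0 by (metis finite_imageI poly_0)
    then have "eventually (\<lambda>s. s \<in> {0<..<1} \<and> (\<forall>\<rho>\<in>cmod ` R. s \<noteq> \<rho>)) (at_left 1)"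
      by (intro eventually_conj eventually_at_left_real eventually_ball_finite ballI
          eventually_neq_at_within) simp_all
    then show ?thesis
      unfolding I_def cbox_interval
      by eventually_elim (intro poly_ln_max_submean_radius[OF p0 _ \<open>B > 0\<close>]; auto simp: R_def)
  qed
  ultimately have "2 * pi * ln (cmod (poly p 0)) \<le> I 1"
    by (rule tendsto_lowerbound) simp
  then show ?thesis unfolding I_def cbox_interval by simp
qed

section \<open>Plurisubharmonicity\<close>

definition polynomial_on_lines :: "(complex^'n \<Rightarrow> complex^'m) \<Rightarrow> bool" where
  "polynomial_on_lines f \<longleftrightarrow> (\<forall>z w i. \<exists>p. \<forall>\<zeta>. f (z + \<zeta> *s w) $ i = poly p \<zeta>)"

lemma polynomial_on_lines_id: "polynomial_on_lines (\<lambda>x. x)"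
  unfolding polynomial_on_lines_def
  by (auto intro!: exI[of _ "[:_ $ _, _ $ _:]"] simp: algebra_simps)

lemma polynomial_on_lines_Fmap_comp:
  assumes "polynomial_on_lines f"
  shows "polynomial_on_lines (\<lambda>x. Fmap e d (f x) :: complex^('k::{finite,linorder}))"
  unfolding polynomial_on_lines_def
proof (intro allI)
  fix z w and i :: 'k
  obtain p q r where p: "\<forall>\<zeta>. f (z + \<zeta> *s w) $ i = poly p \<zeta>"
    and q: "\<forall>\<zeta>. f (z + \<zeta> *s w) $ pred_idx i = poly q \<zeta>"
    and r: "\<forall>\<zeta>. f (z + \<zeta> *s w) $ last_idx = poly r \<zeta>"
    using assms unfolding polynomial_on_lines_def by metis
  show "\<exists>p. \<forall>\<zeta>. Fmap e d (f (z + \<zeta> *s w)) $ i = poly p \<zeta>"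
  proof (cases "i = first_idx")
    case True
    with r show ?thesis by (intro exI[of _ "smult e r"]) (simp add: Fmap_first_idx)
  next
    case False
    with p q show ?thesis by (intro exI[of _ "p ^ d + smult e q"]) (simp add: Fmap_nth)
  qed
qed

lemma polynomial_on_lines_Fiter: "polynomial_on_lines (Fiter eta d n)"
proof (induction n)
  case 0
  show ?case using polynomial_on_lines_Fmap_comp[OF polynomial_on_lines_id] by simp
next
  case (Suc n)
  show ?case using polynomial_on_lines_Fmap_comp[OF Suc.IH] by (simp add: o_def)
qed

lemma continuous_on_circle_line: "continuous_on S (\<lambda>t. z + cis t *s (w::complex^'n))"
proof -
  have "continuous_on UNIV (\<lambda>h::complex. z + h *s w)"
    using has_derivative_complex_line[of z w] has_derivative_continuous
    by (blast intro: continuous_at_imp_continuous_on)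
  then show ?thesis by (rule continuous_on_compose2[OF _ continuous_on_cis]) auto
qed

lemma ln_max_max_norm_submean:
  fixes f :: "complex^'n \<Rightarrow> complex^'m"
  assumes poly: "polynomial_on_lines f" and cont: "continuous_on UNIV f" and "A > 0"
  shows "2 * pi * ln (max A (max_norm (f z))) \<le>
    integral {0..2*pi} (\<lambda>t. ln (max A (max_norm (f (z + cis t *s w)))))"
proof -
  define L where "L t = ln (max A (max_norm (f (z + cis t *s w))))" for t
  have "continuous_on {0..2*pi} L"
    unfolding L_def using \<open>A > 0\<close>
    by (intro continuous_intros continuous_on_ln continuous_on_compose2[OF continuous_on_max_norm]
        continuous_on_compose2[OF cont continuous_on_circle_line]) auto
  then have L_integrable: "L integrable_on {0..2*pi}" by (rule integrable_continuous_interval)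
  show ?thesis
  proof (cases "max_norm (f z) \<le> A")
    case True
    have "2 * pi * ln (max A (max_norm (f z))) = integral {0..2*pi} (\<lambda>t. ln A)"
      using True by (simp add: max_def)
    also have "\<dots> \<le> integral {0..2*pi} L"
      using L_integrable \<open>A > 0\<close> by (intro integral_le) (auto simp: L_def)
    finally show ?thesis unfolding L_def .
  next
    case False
    obtain i where i: "max_norm (f z) = cmod (f z $ i)" by (rule max_norm_attained)
    obtain p where p: "\<And>\<zeta>. f (z + \<zeta> *s w) $ i = poly p \<zeta>"
      using poly unfolding polynomial_on_lines_def by metis
    have p0: "poly p 0 = f z $ i" using p[of 0] by simp
    have "2 * pi * ln (max A (max_norm (f z))) = 2 * pi * ln (cmod (poly p 0))"
      using False i p0 by simp
    also have "\<dots> \<le> integral {0..2*pi} (\<lambda>t. ln (max A (cmod (poly p (cis t)))))"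
      using False i p0 \<open>A > 0\<close> by (intro poly_ln_max_submean) auto
    also have "\<dots> \<le> integral {0..2*pi} L"
    proof (rule integral_le[OF _ L_integrable])
      show "(\<lambda>t. ln (max A (cmod (poly p (cis t))))) integrable_on {0..2*pi}"
        using \<open>A > 0\<close> by (intro integrable_continuous_interval continuous_intros continuous_on_ln) auto
      show "ln (max A (cmod (poly p (cis t)))) \<le> L t" for t
        using norm_nth_le_max_norm[of "f (z + cis t *s w)" i] \<open>A > 0\<close>
        unfolding L_def p by (subst ln_le_cancel_iff) auto
    qed
    finally show ?thesis unfolding L_def .
  qed
qed

lemma usc_decreasing_limit:
  fixes u :: "nat \<Rightarrow> 'a::t2_space \<Rightarrow> real"
  assumes cont: "\<And>n. continuous_on UNIV (u n)" and le: "\<And>n x. \<phi> x \<le> u n x"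
    and lim: "\<And>x. (\<lambda>n. u n x) \<longlonglongrightarrow> \<phi> x"
  shows "usc \<phi>"
  unfolding usc_def
proof (intro allI impI)
  fix x t
  assume "\<phi> x < t"
  then obtain n where "u n x < t"
    using order_tendstoD(2)[OF lim] unfolding eventually_sequentially by blast
  moreover have "isCont (u n) x" using cont continuous_on_eq_continuous_at by blast
  ultimately have "eventually (\<lambda>y. u n y < t) (at x)"
    using order_tendstoD(2) unfolding isCont_def by blast
  then show "eventually (\<lambda>y. \<phi> y < t) (at x)"
    by (rule eventually_mono) (use le le_less_trans in blast)
qed

lemma psh_decreasing_limit:
  fixes u :: "nat \<Rightarrow> complex^'n \<Rightarrow> real" and \<phi> :: "complex^'n \<Rightarrow> real"
  assumes cont: "\<And>n. continuous_on UNIV (u n)"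
    and submean: "\<And>n z w. u n z \<le> 1 / (2*pi) * integral {0..2*pi} (\<lambda>t. u n (z + exp (\<i> * of_real t) *s w))"
    and dec: "\<And>n z. u (Suc n) z \<le> u n z"
    and lower: "\<And>n z. b \<le> u n z"
    and lim: "\<And>z. (\<lambda>n. u n z) \<longlonglongrightarrow> \<phi> z"
  shows "psh \<phi>"
  unfolding psh_def
proof (intro conjI allI)
  have decseq: "decseq (\<lambda>n. u n z)" for z by (rule decseq_SucI) (rule dec)
  then have le: "\<phi> z \<le> u n z" for n z using decseq_ge lim by blast
  show "usc \<phi>" by (rule usc_decreasing_limit[OF cont le lim])
  fix z w
  define f where "f n t = u n (z + exp (\<i> * of_real t) *s w)" for n t
  have f_integrable: "f n integrable_on {0..2*pi}" for n
    unfolding f_def cis_conv_exp[symmetric]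
    by (intro integrable_continuous_interval continuous_on_compose2[OF cont continuous_on_circle_line]) auto
  have "integral {0..2*pi} (\<lambda>t. b) \<le> integral {0..2*pi} (f n)" for n
    using f_integrable lower by (intro integral_le) (auto simp: f_def)
  then have f_lower: "2 * pi * b \<le> integral {0..2*pi} (f n)" for n by simp
  have f_upper: "integral {0..2*pi} (f n) \<le> integral {0..2*pi} (f 0)" for n
    using f_integrable decseq by (intro integral_le) (auto simp: f_def decseq_def)
  have "\<bar>integral {0..2*pi} (f n)\<bar> \<le> \<bar>2 * pi * b\<bar> + \<bar>integral {0..2*pi} (f 0)\<bar>" for n
    using f_lower[of n] f_upper[of n] by linarith
  then have "bounded (range (\<lambda>n. integral {0..2*pi} (f n)))"
    unfolding bounded_real by blast
  then have limit: "(\<lambda>t. \<phi> (z + exp (\<i> * of_real t) *s w)) integrable_on {0..2*pi} \<and>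
      (\<lambda>n. integral {0..2*pi} (f n)) \<longlonglongrightarrow> integral {0..2*pi} (\<lambda>t. \<phi> (z + exp (\<i> * of_real t) *s w))"
    using f_integrable dec lim unfolding f_def by (intro monotone_convergence_decreasing) auto
  then show "(\<lambda>t. \<phi> (z + exp (\<i> * of_real t) *s w)) integrable_on {0..2*pi}" by blast
  have "(\<lambda>n. 1 / (2*pi) * integral {0..2*pi} (f n)) \<longlonglongrightarrow>
      1 / (2*pi) * integral {0..2*pi} (\<lambda>t. \<phi> (z + exp (\<i> * of_real t) *s w))"
    using limit by (intro tendsto_mult_left) blast
  moreover have "\<phi> z \<le> 1 / (2*pi) * integral {0..2*pi} (f n)" for n
    using le[of z n] submean[of n z w] unfolding f_def by linarith
  ultimately show "\<phi> z \<le> 1 / (2*pi) * integral {0..2*pi} (\<lambda>t. \<phi> (z + exp (\<i> * of_real t) *s w))"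
    by (intro LIMSEQ_le_const) auto
qed

section \<open>The basin\<close>

locale shift_like_basin =
  fixes eta :: "nat \<Rightarrow> complex" and a :: real and d :: nat
  assumes a_pos: "0 < a" and a_less_1: "a < 1" and d_ge_2: "2 \<le> d"
    and eta_nonzero: "\<And>n. eta n \<noteq> 0" and norm_eta_le: "\<And>n. cmod (eta n) \<le> a ^ d ^ n"
begin

lemma a_pow_d_pow_le: "a ^ d ^ n \<le> a ^ n"
proof -
  have "n < 2 ^ n" by (rule less_exp)
  also have "(2::nat) ^ n \<le> d ^ n" using d_ge_2 by (rule power_mono) simp
  finally show ?thesis using a_pos a_less_1 by (intro power_decreasing) auto
qed

lemma a_pow_d_pow_tendsto_0: "(\<lambda>n. a ^ d ^ n) \<longlonglongrightarrow> 0"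
  by (rule Lim_null_comparison[OF always_eventually LIMSEQ_realpow_zero[of a]])
    (use a_pos a_less_1 a_pow_d_pow_le in auto)

lemma norm_eta_tendsto_0: "(\<lambda>n. cmod (eta n)) \<longlonglongrightarrow> 0"
  by (rule Lim_null_comparison[OF always_eventually a_pow_d_pow_tendsto_0])
    (use norm_eta_le in auto)

lemma eventually_contracting:
  obtains N where "\<And>n w::complex^('k::{finite,linorder}). N \<le> n \<Longrightarrow>
    norm w < 1 / (4 * real CARD('k)) \<Longrightarrow> norm (Fmap (eta n) d w) \<le> norm w / 2"
proof -
  have "eventually (\<lambda>n. cmod (eta n) < 1 / (4 * real CARD('k))) sequentially"
    by (rule order_tendstoD(2)[OF norm_eta_tendsto_0]) simp
  then obtain N where "\<And>n. N \<le> n \<Longrightarrow> cmod (eta n) \<le> 1 / (4 * real CARD('k))"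
    unfolding eventually_sequentially by (meson less_imp_le)
  then show ?thesis using that norm_Fmap_le_half[OF d_ge_2] by blast
qed

lemma zero_mem_basin: "0 \<in> basin eta d"
  using d_ge_2 by (simp add: basin_def Fiter_zero)

lemma basin_exhaustion:
  obtains \<Omega> :: "nat \<Rightarrow> (complex^('k::{finite,linorder})) set"
  where "basin eta d = (\<Union>j\<in>{1..}. \<Omega> j)" and "\<And>j. \<Omega> j \<subseteq> \<Omega> (Suc j)"
    and "\<And>j. biholomorphic (\<Omega> j) (ball 0 1 :: (complex^('k::{finite,linorder})) set)" and "\<And>j. 0 \<in> \<Omega> j"
proof -
  define r where "r = 1 / (4 * real CARD('k))"
  obtain N where contracting: "\<And>n w::complex^('k::{finite,linorder}). N \<le> n \<Longrightarrow> norm w < r \<Longrightarrow>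
      norm (Fmap (eta n) d w) \<le> norm w / 2"
    unfolding r_def using eventually_contracting by blast
  have "r > 0" unfolding r_def by simp
  show ?thesis
  proof
    show "(basin eta d :: (complex^('k::{finite,linorder})) set) = (\<Union>j\<in>{1..}. Fiter eta d (N + j) -` ball 0 r)"
      by (rule basin_eq_Union_Fiter_preimage[OF contracting \<open>r > 0\<close>])
    show "(Fiter eta d (N + j) -` ball 0 r :: (complex^('k::{finite,linorder})) set)
        \<subseteq> Fiter eta d (N + Suc j) -` ball 0 r" for j
      by (rule Fiter_preimage_ball_mono[OF contracting])
    show "biholomorphic (Fiter eta d (N + j) -` ball 0 r :: (complex^('k::{finite,linorder})) set)
        (ball 0 1 :: (complex^('k::{finite,linorder})) set)" for j
      by (rule biholomorphic_Fiter_preimage_ball[OF eta_nonzero \<open>r > 0\<close>])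
    show "0 \<in> Fiter eta d (N + j) -` ball (0::complex^('k::{finite,linorder})) r" for j
      using d_ge_2 \<open>r > 0\<close> by (simp add: Fiter_zero)
  qed
qed

lemma open_basin: "open (basin eta d :: (complex^('k::{finite,linorder})) set)"
proof -
  obtain \<Omega> :: "nat \<Rightarrow> (complex^('k::{finite,linorder})) set" where "basin eta d = (\<Union>j\<in>{1..}. \<Omega> j)"
    and "\<And>j. biholomorphic (\<Omega> j) (ball 0 1 :: (complex^('k::{finite,linorder})) set)"
    by (rule basin_exhaustion) blast
  then show ?thesis unfolding biholomorphic_def by auto
qed

lemma connected_basin: "connected (basin eta d :: (complex^('k::{finite,linorder})) set)"
proof -
  obtain \<Omega> :: "nat \<Rightarrow> (complex^('k::{finite,linorder})) set" where \<Omega>: "basin eta d = (\<Union>j\<in>{1..}. \<Omega> j)"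
    and "\<And>j. biholomorphic (\<Omega> j) (ball 0 1 :: (complex^('k::{finite,linorder})) set)" and zero: "\<And>j. 0 \<in> \<Omega> j"
    by (rule basin_exhaustion) blast
  then have "\<And>j. connected (\<Omega> j)" by (metis connected_if_biholomorphic_ball)
  moreover have "0 \<in> (\<Inter>j\<in>{1..}. \<Omega> j)" using zero by blast
  ultimately show ?thesis
    unfolding \<Omega> by (intro connected_Union) auto
qed

lemma Fiter_deriv_tendsto_0:
  fixes z :: "complex^('k::{finite,linorder})"
  assumes "z \<in> basin eta d"
  shows "(\<lambda>n. Fiter_deriv eta d n z v) \<longlonglongrightarrow> 0"
proof -
  have "(\<lambda>n. real d * max_norm (Fiter eta d n z) ^ (d - 1) + cmod (eta (Suc n))) \<longlonglongrightarrow>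
      real d * 0 ^ (d - 1) + 0"
    by (intro tendsto_add tendsto_mult tendsto_power tendsto_const max_norm_Fiter_tendsto_0[OF assms]
        LIMSEQ_Suc[OF norm_eta_tendsto_0])
  then have "(\<lambda>n. real d * max_norm (Fiter eta d n z) ^ (d - 1) + cmod (eta (Suc n))) \<longlonglongrightarrow> 0"
    using d_ge_2 by (simp add: power_0_left)
  then have "(\<lambda>n. max_norm (Fiter_deriv eta d n z v)) \<longlonglongrightarrow> 0"
    by (rule LIMSEQ_zero_by_ratio_bound[OF max_norm_nonneg, rotated])
      (simp only: Fiter_deriv.simps o_def, rule max_norm_Fmap_deriv_le)
  then have "(\<lambda>n. real CARD('k) * max_norm (Fiter_deriv eta d n z v)) \<longlonglongrightarrow> 0"
    by (rule tendsto_mult_right_zero)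
  then have "(\<lambda>n. norm (Fiter_deriv eta d n z v)) \<longlonglongrightarrow> 0"
    by (rule Lim_null_comparison[rotated]) (simp add: always_eventually norm_le_card_max_norm)
  then show ?thesis by (rule tendsto_norm_zero_cancel)
qed

lemma kobayashi_basin_eq_0:
  fixes z v :: "complex^('k::{finite,linorder})"
  assumes z: "z \<in> basin eta d"
  shows "kobayashi (basin eta d) z v = 0"
proof (rule kobayashi_eq_0I)
  fix \<epsilon> :: real
  assume "\<epsilon> > 0"
  define r where "r = 1 / (4 * real CARD('k))"
  have "r > 0" unfolding r_def by simp
  obtain N where contracting: "\<And>n w::complex^('k::{finite,linorder}). N \<le> n \<Longrightarrow> norm w < r \<Longrightarrow>
      norm (Fmap (eta n) d w) \<le> norm w / 2"
    unfolding r_def using eventually_contracting by blast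
  have "(\<lambda>n. norm (Fiter eta d n z)) \<longlonglongrightarrow> 0"
    using z unfolding basin_def by (simp add: tendsto_norm_zero)
  moreover have "(\<lambda>n. norm (Fiter_deriv eta d n z v)) \<longlonglongrightarrow> 0"
    using Fiter_deriv_tendsto_0[OF z] by (rule tendsto_norm_zero)
  ultimately have "eventually (\<lambda>n. N \<le> n \<and> norm (Fiter eta d n z) < r / 2 \<and>
      norm (Fiter_deriv eta d n z v) < \<epsilon> * r / 2) sequentially"
    using \<open>r > 0\<close> \<open>\<epsilon> > 0\<close>
    by (intro eventually_conj eventually_ge_at_top order_tendstoD(2)) auto
  then obtain n where n: "N \<le> n" "norm (Fiter eta d n z) < r / 2"
      "norm (Fiter_deriv eta d n z v) < \<epsilon> * r / 2"
    unfolding eventually_sequentially by blast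
  from eta_nonzero contracting n(1) \<open>\<epsilon> > 0\<close> n(2,3)
  show "\<exists>f. disc_holo_on (ball 0 1) f \<and> f ` ball 0 1 \<subseteq> basin eta d \<and> f 0 = z \<and>
      (f has_derivative (\<lambda>h. h *s ((1 / \<epsilon>) *\<^sub>R v))) (at 0)"
    by (rule holomorphic_disc_in_basin)
qed

text \<open>The correction term ln 2 / ((d - 1) d^n) pays for the factor 2 in
  max_norm_Fmap_le_twice_pow; it is what makes phi_approx decrease in n.\<close>

definition phi_approx :: "nat \<Rightarrow> complex^('k::{finite,linorder}) \<Rightarrow> real" where
  "phi_approx n z = ln (max (a ^ d ^ n) (max_norm (Fiter eta d n z))) / real d ^ n
     + ln 2 / ((real d - 1) * real d ^ n)"

definition phi :: "complex^('k::{finite,linorder}) \<Rightarrow> real" where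
  "phi z = (INF n. phi_approx n z)"

lemma max_a_pow_pos: "0 < max (a ^ d ^ n) x"
  using a_pos by (simp add: less_max_iff_disj)

lemma ln_a_le_phi_approx: "ln a \<le> phi_approx n z"
proof -
  have "real d ^ n * ln a = ln (a ^ d ^ n)" using a_pos by (simp add: ln_realpow)
  also have "\<dots> \<le> ln (max (a ^ d ^ n) (max_norm (Fiter eta d n z)))"
    using a_pos max_a_pow_pos by (subst ln_le_cancel_iff) auto
  finally have "ln a \<le> ln (max (a ^ d ^ n) (max_norm (Fiter eta d n z))) / real d ^ n"
    using d_ge_2 by (simp add: field_simps)
  moreover have "0 \<le> ln 2 / ((real d - 1) * real d ^ n)" using d_ge_2 by simp
  ultimately show ?thesis unfolding phi_approx_def by linarith
qed

lemma phi_approx_Suc_le: "phi_approx (Suc n) z \<le> phi_approx n z"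
proof -
  define X where "X = max (a ^ d ^ n) (max_norm (Fiter eta d n z))"
  have "0 < X" unfolding X_def by (rule max_a_pow_pos)
  have "a ^ d ^ Suc n = (a ^ d ^ n) ^ d" by (simp add: power_mult[symmetric] mult.commute)
  then have "max (a ^ d ^ Suc n) (max_norm (Fiter eta d (Suc n) z)) \<le> 2 * X ^ d"
    unfolding X_def using a_pos a_less_1 d_ge_2 norm_eta_le[of "Suc n"]
      max_norm_Fmap_le_twice_pow[of "a ^ d ^ n" "eta (Suc n)" d "Fiter eta d n z"]
    by (simp add: power_le_one)
  then have "ln (max (a ^ d ^ Suc n) (max_norm (Fiter eta d (Suc n) z))) \<le> ln (2 * X ^ d)"
    using max_a_pow_pos[of "Suc n"] \<open>0 < X\<close> by (subst ln_le_cancel_iff) auto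
  also have "\<dots> = ln 2 + real d * ln X" using \<open>0 < X\<close> by (simp add: ln_mult ln_realpow)
  finally have "ln (max (a ^ d ^ Suc n) (max_norm (Fiter eta d (Suc n) z))) \<le> ln 2 + real d * ln X" .
  then have "ln (max (a ^ d ^ Suc n) (max_norm (Fiter eta d (Suc n) z))) / real d ^ Suc n
      \<le> (ln 2 + real d * ln X) / real d ^ Suc n"
    by (rule divide_right_mono) simp
  also have "\<dots> = ln 2 / real d ^ Suc n + ln X / real d ^ n"
    using d_ge_2 by (simp add: field_simps)
  finally have "ln (max (a ^ d ^ Suc n) (max_norm (Fiter eta d (Suc n) z))) / real d ^ Suc n
      \<le> ln 2 / real d ^ Suc n + ln X / real d ^ n" .
  moreover have "ln 2 / real d ^ Suc n + ln 2 / ((real d - 1) * real d ^ Suc n)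
      = ln 2 / ((real d - 1) * real d ^ n)"
    using d_ge_2 by (simp add: field_simps)
  ultimately show ?thesis unfolding phi_approx_def X_def by linarith
qed

lemma phi_approx_tendsto_phi: "(\<lambda>n. phi_approx n z) \<longlonglongrightarrow> phi z"
  unfolding phi_def
  by (rule LIMSEQ_decseq_INF)
    (auto intro: bdd_belowI[of _ "ln a"] ln_a_le_phi_approx decseq_SucI phi_approx_Suc_le)

lemma phi_le_phi_approx: "phi z \<le> phi_approx n z"
  unfolding phi_def using ln_a_le_phi_approx by (intro cINF_lower bdd_belowI) auto

lemma ln_a_le_phi: "ln a \<le> phi z"
  unfolding phi_def using ln_a_le_phi_approx by (intro cINF_greatest) auto

lemma continuous_on_phi_approx: "continuous_on UNIV (phi_approx n)"
  unfolding phi_approx_def[abs_def] using d_ge_2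
  by (intro continuous_intros continuous_on_ln continuous_on_compose2[OF continuous_on_max_norm]
      continuous_on_if_cholo_at[OF cholo_at_Fiter]) (auto simp: max_a_pow_pos[THEN less_imp_neq, THEN not_sym])

lemma phi_approx_submean:
  "phi_approx n z \<le> 1 / (2*pi) * integral {0..2*pi} (\<lambda>t. phi_approx n (z + exp (\<i> * of_real t) *s w))"
proof -
  define D where "D = real d ^ n"
  define c where "c = ln 2 / ((real d - 1) * real d ^ n)"
  define L where "L t = ln (max (a ^ d ^ n) (max_norm (Fiter eta d n (z + cis t *s w))))" for t
  have "D > 0" unfolding D_def using d_ge_2 by simp
  have "continuous_on {0..2*pi} L"
    unfolding L_def
    by (intro continuous_intros continuous_on_ln continuous_on_compose2[OF continuous_on_max_norm]
        continuous_on_compose2[OF continuous_on_if_cholo_at[OF cholo_at_Fiter] continuous_on_circle_line])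
      (auto simp: max_a_pow_pos[THEN less_imp_neq, THEN not_sym])
  then have integral: "((\<lambda>t. L t / D + c) has_integral (integral {0..2*pi} L / D + 2 * pi * c)) {0..2*pi}"
    using has_integral_const_real[of c 0 "2*pi"]
    by (intro has_integral_add has_integral_divide integrable_integral integrable_continuous_interval)
      (auto simp: mult.commute)
  have "2 * pi * ln (max (a ^ d ^ n) (max_norm (Fiter eta d n z))) \<le> integral {0..2*pi} L"
    unfolding L_def using a_pos
    by (intro ln_max_max_norm_submean polynomial_on_lines_Fiter continuous_on_if_cholo_at[OF cholo_at_Fiter]) simp
  then have "ln (max (a ^ d ^ n) (max_norm (Fiter eta d n z))) / D + c
      \<le> 1 / (2*pi) * (integral {0..2*pi} L / D + 2 * pi * c)"
    using \<open>D > 0\<close> by (simp add: field_simps)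
  then have "phi_approx n z \<le> 1 / (2*pi) * (integral {0..2*pi} L / D + 2 * pi * c)"
    unfolding phi_approx_def D_def c_def .
  moreover have "(\<lambda>t. phi_approx n (z + exp (\<i> * of_real t) *s w)) = (\<lambda>t. L t / D + c)"
    unfolding phi_approx_def L_def D_def c_def by (simp add: cis_conv_exp)
  ultimately show ?thesis using integral_unique[OF integral] by simp
qed

lemma psh_phi: "psh (phi :: complex^('k::{finite,linorder}) \<Rightarrow> real)"
  by (rule psh_decreasing_limit[OF continuous_on_phi_approx phi_approx_submean
        phi_approx_Suc_le ln_a_le_phi_approx phi_approx_tendsto_phi])

lemma phi_neg_if_mem_basin:
  fixes z :: "complex^('k::{finite,linorder})"
  assumes "z \<in> basin eta d"
  shows "phi z < 0"
proof -
  have "eventually (\<lambda>n. max_norm (Fiter eta d n z) < 1/4) sequentially"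
    using order_tendstoD(2)[OF max_norm_Fiter_tendsto_0[OF assms], of "1/4"] by simp
  moreover have "eventually (\<lambda>n. a ^ d ^ n < 1/4) sequentially"
    using order_tendstoD(2)[OF a_pow_d_pow_tendsto_0, of "1/4"] by simp
  ultimately have "eventually (\<lambda>n. max_norm (Fiter eta d n z) < 1/4 \<and> a ^ d ^ n < 1/4) sequentially"
    by (rule eventually_conj)
  then obtain n where n: "max_norm (Fiter eta d n z) < 1/4" "a ^ d ^ n < 1/4"
    unfolding eventually_sequentially by blast
  define D where "D = real d ^ n"
  have "D > 0" unfolding D_def using d_ge_2 by simp
  have "ln (max (a ^ d ^ n) (max_norm (Fiter eta d n z))) \<le> ln (1/4)"
    using n max_a_pow_pos by (subst ln_le_cancel_iff) auto
  also have "ln (1/4::real) = - 2 * ln 2"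
    by (simp add: ln_div ln_realpow[of 2 2, simplified])
  finally have "ln (max (a ^ d ^ n) (max_norm (Fiter eta d n z))) / D \<le> - 2 * ln 2 / D"
    by (rule divide_right_mono) (use \<open>D > 0\<close> in simp)
  moreover have "ln 2 / ((real d - 1) * D) \<le> ln 2 / D"
    using d_ge_2 \<open>D > 0\<close> by (intro divide_left_mono mult_pos_pos) auto
  moreover have "- 2 * ln 2 / D + ln 2 / D < 0" using \<open>D > 0\<close> by (simp add: field_simps)
  ultimately have "phi_approx n z < 0" unfolding phi_approx_def D_def by linarith
  then show ?thesis using phi_le_phi_approx[of z n] by simp
qed

lemma mem_basin_if_phi_neg:
  fixes z :: "complex^('k::{finite,linorder})"
  assumes "phi z < 0"
  shows "z \<in> basin eta d"
proof (rule ccontr)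
  assume "z \<notin> basin eta d"
  define K where "K = real CARD('k)"
  define r where "r = 1 / (4 * K)"
  obtain N where contracting: "\<And>n w::complex^('k::{finite,linorder}). N \<le> n \<Longrightarrow> norm w < r \<Longrightarrow>
      norm (Fmap (eta n) d w) \<le> norm w / 2"
    unfolding r_def K_def using eventually_contracting by blast
  have "K > 0" "r > 0" unfolding r_def K_def by simp_all
  have "ln (r / K) / real d ^ n \<le> phi_approx n z" if "N \<le> n" for n
  proof -
    have "r \<le> norm (Fiter eta d n z)"
      using mem_basin_if_Fiter_small[OF contracting that] \<open>z \<notin> basin eta d\<close> by force
    also have "\<dots> \<le> K * max_norm (Fiter eta d n z)" unfolding K_def by (rule norm_le_card_max_norm)
    finally have "r / K \<le> max (a ^ d ^ n) (max_norm (Fiter eta d n z))"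
      using \<open>K > 0\<close> by (simp add: field_simps max.coboundedI2)
    then have "ln (r / K) \<le> ln (max (a ^ d ^ n) (max_norm (Fiter eta d n z)))"
      using \<open>K > 0\<close> \<open>r > 0\<close> by (intro ln_mono) auto
    then have "ln (r / K) / real d ^ n \<le> ln (max (a ^ d ^ n) (max_norm (Fiter eta d n z))) / real d ^ n"
      by (rule divide_right_mono) simp
    moreover have "0 \<le> ln 2 / ((real d - 1) * real d ^ n)" using d_ge_2 by simp
    ultimately show ?thesis unfolding phi_approx_def by linarith
  qed
  moreover have "(\<lambda>n. ln (r / K) / real d ^ n) \<longlonglongrightarrow> 0"
    using d_ge_2 by (intro LIMSEQ_divide_realpow_zero) simp
  ultimately have "0 \<le> phi z"
    by (intro LIMSEQ_le[OF _ phi_approx_tendsto_phi]) (auto simp: eventually_sequentially)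
  with assms show False by simp
qed

lemma basin_eq_phi_neg: "(basin eta d :: (complex^('k::{finite,linorder})) set) = {z. phi z < 0}"
  using phi_neg_if_mem_basin mem_basin_if_phi_neg by blast

end

theorem theorem3p1:
  fixes eta :: "nat \<Rightarrow> complex" and a :: real and d :: nat
  assumes "CARD('k::{finite,linorder}) \<ge> 2"
    and "0 < a" and "a < 1" and "d \<ge> 2"
    and "\<And>n. eta n \<noteq> 0"
    and "\<And>n. cmod (eta n) \<le> a ^ (d ^ n)"
  shows "(open (basin eta d :: (complex^('k::{finite,linorder})) set) \<and> connected (basin eta d :: (complex^('k::{finite,linorder})) set)
            \<and> (basin eta d :: (complex^('k::{finite,linorder})) set) \<noteq> {})
       \<and> (\<exists>\<Omega>j :: nat \<Rightarrow> (complex^('k::{finite,linorder})) set.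
            (basin eta d = (\<Union>j\<in>{1..}. \<Omega>j j)) \<and> (\<forall>j\<ge>1. \<Omega>j j \<subseteq> \<Omega>j (Suc j))
            \<and> (\<forall>j\<ge>1. biholomorphic (\<Omega>j j) (ball (0::complex^('k::{finite,linorder})) 1)))
       \<and> (\<forall>z\<in>(basin eta d :: (complex^('k::{finite,linorder})) set). \<forall>v. kobayashi (basin eta d) z v = 0)
       \<and> (\<exists>\<phi> :: complex^('k::{finite,linorder}) \<Rightarrow> real. psh \<phi> \<and> (\<forall>z. \<phi> z \<ge> ln a)
            \<and> basin eta d = {z. \<phi> z < 0})"
proof -
  interpret shift_like_basin eta a d
    using assms by unfold_locales auto
  obtain \<Omega> :: "nat \<Rightarrow> (complex^('k::{finite,linorder})) set"
    where "basin eta d = (\<Union>j\<in>{1..}. \<Omega> j)" "\<And>j. \<Omega> j \<subseteq> \<Omega> (Suc j)"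
      "\<And>j. biholomorphic (\<Omega> j) (ball 0 1 :: (complex^('k::{finite,linorder})) set)"
    by (rule basin_exhaustion) blast
  then show ?thesis
    using open_basin connected_basin zero_mem_basin kobayashi_basin_eq_0
      psh_phi ln_a_le_phi basin_eq_phi_neg
    by blast
qed

end
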